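(* Let $P_0,P_1$ be the bivectors on the region of $\mathbb{R}^{2n}$ (coordinates $(q,p)$, $q_i$ pairwise distinct) $$P_0=\sum_{i,j=1}^np_ie^{-|q_i-q_j|}\partial_{p_i}\wedge\partial_{q_j}-\sum_{i<j}\mathrm{sign}(q_i-q_j)p_ip_je^{-|q_i-q_j|}\partial_{p_i}\wedge\partial_{p_j}+\sum_{i<j}\mathrm{sign}(q_i-q_j)(e^{-|q_i-q_j|}-1)\partial_{q_i}\wedge\partial_{q_j},\quad P_1=\sum_{i=1}^n\partial_{p_i}\wedge\partial_{q_i},$$ viewed as maps from 1-forms to vector fields, and let $S=P_1^{-1}\circ P_0$ be the recursion operator on 1-forms. Let $H_0=\sum_ip_i$, $H_1=\frac12\sum_{i,j}p_ip_je^{-|q_i-q_j|}$, and define $H_{i+1}$ for $i\ge1$ by $dH_{i+1}=S^i(dH_1)$. Then each $H_i$ is a polynomial function of $p$ of degree $i+1$.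
   Context: For a bivector $P=\sum P^{ij}\partial_{x_i}\wedge\partial_{x_j}$, the associated map sends a 1-form $\alpha$ to $P(\alpha,\cdot)$. The pair $(P_0,P_1)$ is a bi-Hamiltonian structure with $P_0(dH_0,\cdot)=P_1(dH_1,\cdot)$, so the 1-forms $S^i(dH_1)$ are closed and the $H_i$ are first integrals (defined up to additive constants). *)

theory Defs
  imports "HOL-Analysis.Analysis"
begin

text \<open>Coordinates of R^{2n} are
indexed by 'n + 'n: Inl i is q_i and Inr i is p_i.  Covectors (values of 1-forms)
and vectors (values of vector fields) are given by their components, i.e. as
functions 'n + 'n => real.\<close>

type_synonym 'n point = "(real^'n) \<times> (real^'n)"
type_synonym 'n comps = "'n + 'n \<Rightarrow> real"

definition coord :: "('n::finite) point \<Rightarrow> 'n comps" where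
  "coord x k = (case k of Inl i \<Rightarrow> fst x $ i | Inr i \<Rightarrow> snd x $ i)"

definition cbasis :: "('n::finite) + 'n \<Rightarrow> 'n point" where
  "cbasis k = (case k of Inl i \<Rightarrow> (axis i 1, 0) | Inr i \<Rightarrow> (0, axis i 1))"

definition dform :: "('n::finite point \<Rightarrow> real) \<Rightarrow> 'n point \<Rightarrow> 'n comps" where
  "dform H x = (\<lambda>k. frechet_derivative H (at x) (cbasis k))"

definition has_dform_on ::
  "('n::finite point \<Rightarrow> real) \<Rightarrow> ('n point \<Rightarrow> 'n comps) \<Rightarrow> 'n point set \<Rightarrow> bool" where
  "has_dform_on H \<alpha> U \<longleftrightarrow>
     (\<forall>x\<in>U. (H has_derivative (\<lambda>v. \<Sum>k\<in>UNIV. \<alpha> x k * coord v k)) (at x))"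

text \<open>A bivector field P = sum_{k,l} P^{kl} d_k wedge d_l, given by its coefficient
functions, and its associated map alpha |-> P(alpha, .), using
(d_k wedge d_l)(alpha, .) = alpha_k d_l - alpha_l d_k.\<close>
type_synonym 'n bivector = "'n point \<Rightarrow> 'n + 'n \<Rightarrow> 'n + 'n \<Rightarrow> real"

definition bv_map :: "'n::finite bivector \<Rightarrow> 'n point \<Rightarrow> 'n comps \<Rightarrow> 'n comps" where
  "bv_map P x \<alpha> = (\<lambda>m. (\<Sum>k\<in>UNIV. P x k m * \<alpha> k) - (\<Sum>l\<in>UNIV. P x m l * \<alpha> l))"

abbreviation E :: "('n::finite) point \<Rightarrow> 'n \<Rightarrow> 'n \<Rightarrow> real" where
  "E x i j \<equiv> exp (- \<bar>fst x $ i - fst x $ j\<bar>)"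

definition P0 :: "('n::{finite,linorder}) bivector" where
  "P0 x k l = (case (k, l) of
      (Inr i, Inl j) \<Rightarrow> snd x $ i * E x i j
    | (Inr i, Inr j) \<Rightarrow> (if i < j then - (sgn (fst x $ i - fst x $ j) * snd x $ i * snd x $ j * E x i j) else 0)
    | (Inl i, Inl j) \<Rightarrow> (if i < j then sgn (fst x $ i - fst x $ j) * (E x i j - 1) else 0)
    | (Inl i, Inr j) \<Rightarrow> 0)"

definition P1 :: "('n::finite) bivector" where
  "P1 x k l = (case (k, l) of (Inr i, Inl j) \<Rightarrow> (if i = j then 1 else 0) | _ \<Rightarrow> 0)"

definition S_at :: "('n::{finite,linorder}) point \<Rightarrow> 'n comps \<Rightarrow> 'n comps" where
  "S_at x \<alpha> = (THE \<beta>. bv_map P1 x \<beta> = bv_map P0 x \<alpha>)"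

definition S_op :: "('n::{finite,linorder} point \<Rightarrow> 'n comps) \<Rightarrow> ('n point \<Rightarrow> 'n comps)" where
  "S_op \<alpha> = (\<lambda>x. S_at x (\<alpha> x))"

definition region :: "('n::finite) point set" where
  "region = {x. \<forall>i j. i \<noteq> j \<longrightarrow> fst x $ i \<noteq> fst x $ j}"

definition Ham0 :: "('n::finite) point \<Rightarrow> real" where
  "Ham0 x = (\<Sum>i\<in>UNIV. snd x $ i)"

definition Ham1 :: "('n::finite) point \<Rightarrow> real" where
  "Ham1 x = 1/2 * (\<Sum>i\<in>UNIV. \<Sum>j\<in>UNIV. snd x $ i * snd x $ j * E x i j)"

definition poly_in_p_deg :: "('n::finite point \<Rightarrow> real) \<Rightarrow> 'n point set \<Rightarrow> nat \<Rightarrow> bool" where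
  "poly_in_p_deg H U d \<longleftrightarrow>
     (\<exists>c :: ('n \<Rightarrow> nat) \<Rightarrow> real^'n \<Rightarrow> real.
        (\<forall>x\<in>U. H x = (\<Sum>a\<in>{a. sum a UNIV \<le> d}. c a (fst x) * (\<Prod>i\<in>UNIV. (snd x $ i) ^ a i)))
      \<and> (\<exists>a x. sum a UNIV = d \<and> x \<in> U \<and> c a (fst x) \<noteq> 0))"

end

theory Submission
  imports Defs
begin

text \<open>Call a function on the region \<^emph>\<open>p-homogeneous of degree d\<close> if it is a homogeneous
polynomial of degree d in p with coefficients depending on q, and call a 1-form
\<^emph>\<open>graded of degree d\<close> if its dq-components are p-homogeneous of degree d + 1 and its
dp-components of degree d.  Since P_1 just swaps dq and dp, and every coefficient of P_0
of type dp/dq, dp/dp, dq/dq has p-degree 1, 2, 0 respectively, S raises the grading by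
one; as dH_1 is graded of degree 1, S^k(dH_1) is graded of degree k + 1.  Integrating
dH_{k+2} = S^k(dH_1) along the ray t \<mapsto> (q, t p) (Euler's identity) exhibits H_{k+2} as
a function of q plus a p-homogeneous polynomial of degree k + 2.  That polynomial does
not vanish: at p = e_i the form S^k(dH_1) has vanishing dq-part and dp_i-component 1.\<close>

section \<open>Polynomials in p with coefficients depending on q\<close>

definition p_monomial :: "('n \<Rightarrow> nat) \<Rightarrow> ('n::finite) point \<Rightarrow> real" where
  "p_monomial a x = (\<Prod>i\<in>UNIV. (snd x $ i) ^ a i)"

definition p_homogeneous :: "nat \<Rightarrow> ('n::finite point \<Rightarrow> real) \<Rightarrow> bool" where
  "p_homogeneous d f \<longleftrightarrow> (\<exists>c::('n \<Rightarrow> nat) \<Rightarrow> real^'n \<Rightarrow> real.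
     \<forall>x\<in>region. f x = (\<Sum>a\<in>{a. sum a UNIV = d}. c a (fst x) * p_monomial a x))"

lemma finite_multidegrees_le: "finite {a::'n::finite \<Rightarrow> nat. sum a UNIV \<le> d}"
proof (rule finite_subset)
  have "a i \<le> sum a UNIV" for a :: "'n \<Rightarrow> nat" and i
    by (rule member_le_sum) auto
  then show "{a::'n \<Rightarrow> nat. sum a UNIV \<le> d}
      \<subseteq> {f. \<forall>x. (x \<in> UNIV \<longrightarrow> f x \<in> {0..d}) \<and> (x \<notin> UNIV \<longrightarrow> f x = 0)}"
    by (auto intro: order_trans)
  show "finite {f::'n \<Rightarrow> nat. \<forall>x. (x \<in> UNIV \<longrightarrow> f x \<in> {0..d}) \<and> (x \<notin> UNIV \<longrightarrow> f x = 0)}"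
    by (rule finite_set_of_finite_funs) auto
qed

lemma finite_multidegrees_eq: "finite {a::'n::finite \<Rightarrow> nat. sum a UNIV = d}"
  by (rule finite_subset[OF _ finite_multidegrees_le[of d]]) auto

lemma p_homogeneous_cong:
  "p_homogeneous d f \<Longrightarrow> (\<And>x. x \<in> region \<Longrightarrow> f x = g x) \<Longrightarrow> p_homogeneous d g"
  unfolding p_homogeneous_def by metis

lemma p_homogeneous_zero: "p_homogeneous d (\<lambda>x. 0)"
  unfolding p_homogeneous_def by (rule exI[of _ "\<lambda>a q. 0"]) simp

lemma p_homogeneous_add:
  assumes "p_homogeneous d f" "p_homogeneous d g"
  shows "p_homogeneous d (\<lambda>x. f x + g x)"
proof -
  obtain c1 c2
    where "\<forall>x\<in>region. f x = (\<Sum>a\<in>{a. sum a UNIV = d}. c1 a (fst x) * p_monomial a x)"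
      and "\<forall>x\<in>region. g x = (\<Sum>a\<in>{a. sum a UNIV = d}. c2 a (fst x) * p_monomial a x)"
    using assms unfolding p_homogeneous_def by blast
  then show ?thesis unfolding p_homogeneous_def
    by (intro exI[of _ "\<lambda>a q. c1 a q + c2 a q"]) (simp add: sum.distrib ring_distribs)
qed

lemma p_homogeneous_mult_coeff:
  assumes "p_homogeneous d f"
  shows "p_homogeneous d (\<lambda>x. g (fst x) * f x)"
proof -
  obtain c where "\<forall>x\<in>region. f x = (\<Sum>a\<in>{a. sum a UNIV = d}. c a (fst x) * p_monomial a x)"
    using assms unfolding p_homogeneous_def by blast
  then show ?thesis unfolding p_homogeneous_def
    by (intro exI[of _ "\<lambda>a q. g q * c a q"]) (simp add: sum_distrib_left mult.assoc)
qed

lemma p_homogeneous_sum: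
  "finite I \<Longrightarrow> (\<And>i. i \<in> I \<Longrightarrow> p_homogeneous d (f i)) \<Longrightarrow> p_homogeneous d (\<lambda>x. \<Sum>i\<in>I. f i x)"
  by (induction I rule: finite_induct) (auto intro: p_homogeneous_zero p_homogeneous_add)

lemma p_homogeneous_uminus: "p_homogeneous d f \<Longrightarrow> p_homogeneous d (\<lambda>x. - f x)"
  using p_homogeneous_mult_coeff[of d f "\<lambda>q. -1"] by simp

lemma p_homogeneous_diff:
  "p_homogeneous d f \<Longrightarrow> p_homogeneous d g \<Longrightarrow> p_homogeneous d (\<lambda>x. f x - g x)"
  using p_homogeneous_add[of d f "\<lambda>x. - g x"] p_homogeneous_uminus[of d g] by simp

lemma p_homogeneous_coeff:
  fixes g :: "real^('n::finite) \<Rightarrow> real"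
  shows "p_homogeneous 0 (\<lambda>x. g (fst x))"
proof -
  have "{a::'n \<Rightarrow> nat. sum a UNIV = 0} = {\<lambda>_. 0}"
    by (auto simp: fun_eq_iff)
  then show ?thesis unfolding p_homogeneous_def
    by (intro exI[of _ "\<lambda>a q. g q"]) (simp add: p_monomial_def)
qed

lemma p_homogeneous_mult_p:
  fixes j :: "'n::finite"
  assumes "p_homogeneous d f"
  shows "p_homogeneous (Suc d) (\<lambda>x. snd x $ j * f x)"
proof -
  obtain c where c: "\<forall>x\<in>region. f x = (\<Sum>a\<in>{a. sum a UNIV = d}. c a (fst x) * p_monomial a x)"
    using assms unfolding p_homogeneous_def by blast
  define C where "C e q = (if 0 < e j then c (e(j := e j - 1)) q else 0)" for e q
  have sum_split: "sum a UNIV = a j + sum a (UNIV - {j})" for a :: "'n \<Rightarrow> nat"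
    by (simp add: sum.remove[of UNIV j])
  show ?thesis unfolding p_homogeneous_def
  proof (intro exI[of _ C] ballI)
    fix x :: "'n point" assume x: "x \<in> region"
    have monomial_update: "p_monomial (a(j := v)) x = (snd x $ j) ^ v * (\<Prod>i\<in>UNIV - {j}. (snd x $ i) ^ a i)"
      for a v
      unfolding p_monomial_def by (simp add: prod.remove[of UNIV j])
    have "(\<Sum>e\<in>{e. sum e UNIV = Suc d}. C e (fst x) * p_monomial e x)
        = (\<Sum>e\<in>{e. sum e UNIV = Suc d \<and> 0 < e j}. c (e(j := e j - 1)) (fst x) * p_monomial e x)"
      by (rule sum.mono_neutral_cong_right[OF finite_multidegrees_eq]) (auto simp: C_def)
    also have "\<dots> = (\<Sum>a\<in>{a. sum a UNIV = d}. c a (fst x) * (snd x $ j * p_monomial a x))"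
    proof (rule sym, rule sum.reindex_bij_witness[where j="\<lambda>a. a(j := a j + 1)"
          and i="\<lambda>e. e(j := e j - 1)"])
      fix a :: "'n \<Rightarrow> nat" assume "a \<in> {a. sum a UNIV = d}"
      then show "a(j := a j + 1) \<in> {e. sum e UNIV = Suc d \<and> 0 < e j}"
        using sum_split[of a] sum_split[of "a(j := a j + 1)"] by simp
      have "p_monomial (a(j := a j + 1)) x = snd x $ j * p_monomial a x"
        using monomial_update[of a "a j + 1"] monomial_update[of a "a j"] by simp
      then show "c ((a(j := a j + 1))(j := (a(j := a j + 1)) j - 1)) (fst x)
          * p_monomial (a(j := a j + 1)) x = c a (fst x) * (snd x $ j * p_monomial a x)"
        by simp
    next
      fix e :: "'n \<Rightarrow> nat" assume "e \<in> {e. sum e UNIV = Suc d \<and> 0 < e j}"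
      then show "e(j := e j - 1) \<in> {a. sum a UNIV = d}"
        using sum_split[of e] sum_split[of "e(j := e j - 1)"] by simp
    qed auto
    also have "\<dots> = snd x $ j * f x"
      using c x by (simp add: sum_distrib_left mult.left_commute)
    finally show "snd x $ j * f x = (\<Sum>e\<in>{e. sum e UNIV = Suc d}. C e (fst x) * p_monomial e x)"
      by simp
  qed
qed

lemma region_iff: "x \<in> region \<longleftrightarrow> (\<forall>i j. i \<noteq> j \<longrightarrow> fst x $ i \<noteq> fst x $ j)"
  by (simp add: region_def)

lemma p_homogeneous_scaleR:
  assumes "p_homogeneous d f" "x \<in> region"
  shows "f (fst x, t *\<^sub>R snd x) = t ^ d * f x"
proof -
  obtain c where "\<forall>x\<in>region. f x = (\<Sum>a\<in>{a. sum a UNIV = d}. c a (fst x) * p_monomial a x)"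
    using assms unfolding p_homogeneous_def by blast
  moreover have "p_monomial a (fst x, t *\<^sub>R snd x) = t ^ sum a UNIV * p_monomial a x" for a
    by (simp add: p_monomial_def power_mult_distrib prod.distrib power_sum)
  ultimately show ?thesis
    using assms(2) by (simp add: region_iff sum_distrib_left mult.left_commute)
qed

lemma poly_in_p_deg_add_p_homogeneous:
  fixes H F :: "'n::finite point \<Rightarrow> real"
  assumes "d \<ge> 1" and F: "p_homogeneous d F" and H: "\<forall>x\<in>region. H x = g (fst x) + F x"
    and x0: "x0 \<in> region" and F_nonzero: "F x0 \<noteq> 0"
  shows "poly_in_p_deg H region d"
proof -
  obtain cF where cF: "\<forall>x\<in>region. F x = (\<Sum>a\<in>{a. sum a UNIV = d}. cF a (fst x) * p_monomial a x)"
    using F unfolding p_homogeneous_def by blast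
  define c where "c a q = (if sum a UNIV = 0 then g q else 0) + (if sum a UNIV = d then cF a q else 0)"
    for a :: "'n \<Rightarrow> nat" and q
  have degree_0: "{a \<in> {a::'n \<Rightarrow> nat. sum a UNIV \<le> d}. sum a UNIV = 0} = {\<lambda>_. 0}"
    by (auto simp: fun_eq_iff)
  have degree_d: "{a \<in> {a::'n \<Rightarrow> nat. sum a UNIV \<le> d}. sum a UNIV = d} = {a. sum a UNIV = d}"
    by auto
  have H_expansion: "H x = (\<Sum>a\<in>{a. sum a UNIV \<le> d}. c a (fst x) * p_monomial a x)"
    if x: "x \<in> region" for x
  proof -
    have "(\<Sum>a\<in>{a. sum a UNIV \<le> d}. c a (fst x) * p_monomial a x)
       = (\<Sum>a\<in>{a. sum a UNIV \<le> d}. if sum a UNIV = 0 then g (fst x) * p_monomial a x else 0)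
       + (\<Sum>a\<in>{a. sum a UNIV \<le> d}. if sum a UNIV = d then cF a (fst x) * p_monomial a x else 0)"
    proof -
      have "c a (fst x) * p_monomial a x
          = (if sum a UNIV = 0 then g (fst x) * p_monomial a x else 0)
          + (if sum a UNIV = d then cF a (fst x) * p_monomial a x else 0)" for a
        by (simp add: c_def ring_distribs)
      then show ?thesis by (simp add: sum.distrib)
    qed
    also have "\<dots> = g (fst x) + F x"
      using cF x
      by (simp only: sum.inter_filter[OF finite_multidegrees_le, symmetric] degree_0 degree_d)
         (simp add: p_monomial_def)
    finally show ?thesis using H x by simp
  qed
  obtain a where a: "sum a UNIV = d" "cF a (fst x0) \<noteq> 0"
    using cF x0 F_nonzero by (force intro: sum.neutral)
  have "c a (fst x0) \<noteq> 0" using a \<open>d \<ge> 1\<close> by (simp add: c_def)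
  then show ?thesis unfolding poly_in_p_deg_def
    using H_expansion a(1) x0 by (intro exI[of _ c] conjI) (auto simp: p_monomial_def, metis prod.collapse)
qed

lemma ex_in_region: "\<exists>q. (q, v) \<in> (region :: ('n::finite) point set)"
  by (rule exI[of _ "\<chi> i. real (to_nat i)"]) (simp add: region_iff)

section \<open>The recursion operator\<close>

lemma sum_UNIV_sum_type:
  "(\<Sum>k\<in>(UNIV :: ('a::finite + 'b::finite) set). f k) = (\<Sum>i\<in>UNIV. f (Inl i)) + (\<Sum>i\<in>UNIV. f (Inr i))"
  using sum.Plus[of "UNIV :: 'a set" "UNIV :: 'b set" f] by (simp add: comp_def)

lemma bv_map_P1: "bv_map P1 x \<beta> = (\<lambda>m. case m of Inl j \<Rightarrow> \<beta> (Inr j) | Inr j \<Rightarrow> - \<beta> (Inl j))"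
  by (auto simp: fun_eq_iff bv_map_def sum_UNIV_sum_type P1_def if_distrib if_distribR
      cong: if_cong split: sum.split)

lemma S_at_eq:
  "S_at x \<alpha> = (\<lambda>m. case m of Inl j \<Rightarrow> - bv_map P0 x \<alpha> (Inr j) | Inr j \<Rightarrow> bv_map P0 x \<alpha> (Inl j))"
  unfolding S_at_def
proof (rule the_equality)
  fix \<beta> assume "bv_map P1 x \<beta> = bv_map P0 x \<alpha>"
  then have "\<beta> (Inr j) = bv_map P0 x \<alpha> (Inl j)" "\<beta> (Inl j) = - bv_map P0 x \<alpha> (Inr j)" for j
    unfolding bv_map_P1 fun_eq_iff by (metis sum.case(1), metis minus_minus sum.case(2))
  then show "\<beta> = (\<lambda>m. case m of Inl j \<Rightarrow> - bv_map P0 x \<alpha> (Inr j) | Inr j \<Rightarrow> bv_map P0 x \<alpha> (Inl j))"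
    by (auto simp: fun_eq_iff split: sum.split)
qed (auto simp: bv_map_P1 fun_eq_iff split: sum.split)

lemma bv_map_P0_Inl:
  "bv_map P0 x \<alpha> (Inl j) = (\<Sum>i\<in>UNIV. P0 x (Inl i) (Inl j) * \<alpha> (Inl i))
     + (\<Sum>i\<in>UNIV. P0 x (Inr i) (Inl j) * \<alpha> (Inr i)) - (\<Sum>i\<in>UNIV. P0 x (Inl j) (Inl i) * \<alpha> (Inl i))"
  by (simp add: bv_map_def sum_UNIV_sum_type P0_def)

lemma bv_map_P0_Inr:
  "bv_map P0 x \<alpha> (Inr j) = (\<Sum>i\<in>UNIV. P0 x (Inr i) (Inr j) * \<alpha> (Inr i))
     - (\<Sum>i\<in>UNIV. P0 x (Inr j) (Inl i) * \<alpha> (Inl i)) - (\<Sum>i\<in>UNIV. P0 x (Inr j) (Inr i) * \<alpha> (Inr i))"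
  by (simp add: bv_map_def sum_UNIV_sum_type P0_def)

definition graded_form :: "nat \<Rightarrow> ('n::finite point \<Rightarrow> 'n comps) \<Rightarrow> bool" where
  "graded_form d \<alpha> \<longleftrightarrow>
     (\<forall>j. p_homogeneous (Suc d) (\<lambda>x. \<alpha> x (Inl j))) \<and> (\<forall>j. p_homogeneous d (\<lambda>x. \<alpha> x (Inr j)))"

lemma p_homogeneous_mult_P0_Inl_Inl:
  "p_homogeneous d f \<Longrightarrow> p_homogeneous d (\<lambda>x. P0 x (Inl i) (Inl j) * f x)"
  by (rule p_homogeneous_cong[OF p_homogeneous_mult_coeff[of d f
        "\<lambda>q. if i < j then sgn (q$i - q$j) * (exp (- \<bar>q$i - q$j\<bar>) - 1) else 0"]])
     (simp_all add: P0_def)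

lemma p_homogeneous_mult_P0_Inr_Inl:
  "p_homogeneous d f \<Longrightarrow> p_homogeneous (Suc d) (\<lambda>x. P0 x (Inr i) (Inl j) * f x)"
  by (rule p_homogeneous_cong[OF p_homogeneous_mult_p[where j=i, OF p_homogeneous_mult_coeff[of d f
        "\<lambda>q. exp (- \<bar>q$i - q$j\<bar>)"]]])
     (simp_all add: P0_def)

lemma p_homogeneous_mult_P0_Inr_Inr:
  "p_homogeneous d f \<Longrightarrow> p_homogeneous (Suc (Suc d)) (\<lambda>x. P0 x (Inr i) (Inr j) * f x)"
  by (rule p_homogeneous_cong[OF p_homogeneous_mult_p[where j=i, OF p_homogeneous_mult_p[where j=j, OF
        p_homogeneous_mult_coeff[of d f
        "\<lambda>q. if i < j then - (sgn (q$i - q$j) * exp (- \<bar>q$i - q$j\<bar>)) else 0"]]]])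
     (simp_all add: P0_def)

lemma graded_form_S_op:
  assumes "graded_form d \<alpha>"
  shows "graded_form (Suc d) (S_op \<alpha>)"
proof -
  have "p_homogeneous (Suc d) (\<lambda>x. \<alpha> x (Inl j))" "p_homogeneous d (\<lambda>x. \<alpha> x (Inr j))" for j
    using assms by (auto simp: graded_form_def)
  then show ?thesis
    unfolding graded_form_def S_op_def S_at_eq
    by (auto simp: bv_map_P0_Inl bv_map_P0_Inr
        intro!: p_homogeneous_uminus p_homogeneous_diff p_homogeneous_add p_homogeneous_sum
          p_homogeneous_mult_P0_Inl_Inl p_homogeneous_mult_P0_Inr_Inl p_homogeneous_mult_P0_Inr_Inr)
qed

lemma has_derivative_vec_nth [derivative_intros]:
  "(f has_derivative f') F \<Longrightarrow> ((\<lambda>x. f x $ i) has_derivative (\<lambda>v. f' v $ i)) F"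
  by (rule bounded_linear.has_derivative[OF bounded_linear_vec_nth])

definition Ham1_term_derivative :: "'n::finite \<Rightarrow> 'n \<Rightarrow> 'n point \<Rightarrow> 'n point \<Rightarrow> real" where
  "Ham1_term_derivative i j x v = (snd v$i * snd x$j + snd x$i * snd v$j) * E x i j
     - snd x$i * snd x$j * E x i j * (sgn (fst x$i - fst x$j) * (fst v$i - fst v$j))"

lemma Ham1_term_has_derivative:
  fixes i j :: "'n::finite"
  assumes x: "x \<in> region"
  shows "((\<lambda>x. snd x$i * snd x$j * E x i j) has_derivative Ham1_term_derivative i j x) (at x)"
proof (cases "i = j")
  case True
  then show ?thesis
    by (auto intro!: derivative_eq_intros simp: Ham1_term_derivative_def fun_eq_iff)
next
  case False
  then have q_diff_nonzero: "fst x$i - fst x$j \<noteq> 0" using x by (auto simp: region_iff)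
  have "((\<lambda>x::'n point. fst x$i - fst x$j) has_derivative (\<lambda>v. fst v$i - fst v$j)) (at x)"
    by (auto intro!: derivative_eq_intros)
  from has_derivative_compose[OF this has_derivative_norm[OF q_diff_nonzero]]
  have abs_q_diff: "((\<lambda>x::'n point. \<bar>fst x$i - fst x$j\<bar>) has_derivative
      (\<lambda>v. sgn (fst x$i - fst x$j) * (fst v$i - fst v$j))) (at x)"
    by (simp add: mult.commute)
  show ?thesis
    unfolding Ham1_term_derivative_def
    by (rule derivative_eq_intros abs_q_diff refl | simp)+ (simp add: algebra_simps)
qed

lemma dform_Ham1:
  assumes "x \<in> region"
  shows "dform Ham1 x k = 1/2 * (\<Sum>i\<in>UNIV. \<Sum>j\<in>UNIV. Ham1_term_derivative i j x (cbasis k))"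
proof -
  have "(Ham1 has_derivative (\<lambda>v. 1/2 * (\<Sum>i\<in>UNIV. \<Sum>j\<in>UNIV. Ham1_term_derivative i j x v))) (at x)"
    unfolding Ham1_def
    by (intro has_derivative_mult_right has_derivative_sum Ham1_term_has_derivative[OF assms])
  then show ?thesis
    unfolding dform_def by (metis frechet_derivative_at)
qed

lemma graded_form_dform_Ham1: "graded_form (Suc 0) (dform (Ham1 :: 'n::finite point \<Rightarrow> real))"
proof -
  have "p_homogeneous (Suc (Suc 0)) (\<lambda>x::'n point. Ham1_term_derivative i j x (cbasis (Inl m)))"
    for i j m
    by (rule p_homogeneous_cong[OF p_homogeneous_mult_p[where j=i, OF p_homogeneous_mult_p[where j=j, OF
          p_homogeneous_coeff[where g="\<lambda>q. - (exp (- \<bar>q$i - q$j\<bar>)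
            * (sgn (q$i - q$j) * ((if i = m then 1 else 0) - (if j = m then 1 else 0))))"]]]])
       (simp add: Ham1_term_derivative_def cbasis_def axis_def algebra_simps)
  moreover have "p_homogeneous (Suc 0) (\<lambda>x::'n point. Ham1_term_derivative i j x (cbasis (Inr m)))"
    for i j m
    by (rule p_homogeneous_cong[OF p_homogeneous_add[OF
          p_homogeneous_mult_p[where j=j, OF p_homogeneous_coeff[where
            g="\<lambda>q. (if i = m then 1 else 0) * exp (- \<bar>q$i - q$j\<bar>)"]]
          p_homogeneous_mult_p[where j=i, OF p_homogeneous_coeff[where
            g="\<lambda>q. (if j = m then 1 else 0) * exp (- \<bar>q$i - q$j\<bar>)"]]]])
       (simp add: Ham1_term_derivative_def cbasis_def axis_def algebra_simps)
  moreover have "p_homogeneous d (\<lambda>x::'n point. dform Ham1 x k)"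
    if "\<And>i j. p_homogeneous d (\<lambda>x::'n point. Ham1_term_derivative i j x (cbasis k))" for d k
  proof -
    have "p_homogeneous d (\<lambda>x::'n point. (\<lambda>q. 1/2) (fst x)
        * (\<Sum>i\<in>UNIV. \<Sum>j\<in>UNIV. Ham1_term_derivative i j x (cbasis k)))"
      using that by (intro p_homogeneous_mult_coeff p_homogeneous_sum finite)
    then show ?thesis by (rule p_homogeneous_cong) (simp add: dform_Ham1)
  qed
  ultimately show ?thesis unfolding graded_form_def by blast
qed

lemma graded_form_S_op_power_dform_Ham1:
  "graded_form (Suc k) ((S_op ^^ k) (dform (Ham1 :: 'n::{finite,linorder} point \<Rightarrow> real)))"
  by (induction k) (simp_all add: graded_form_dform_Ham1 graded_form_S_op)

section \<open>Normalisation on the coordinate axes\<close>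

definition normalised_at_axis :: "'n::finite \<Rightarrow> ('n point \<Rightarrow> 'n comps) \<Rightarrow> bool" where
  "normalised_at_axis i \<alpha> \<longleftrightarrow> (\<forall>q. (q, axis i 1) \<in> region \<longrightarrow>
     (\<forall>m. \<alpha> (q, axis i 1) (Inl m) = 0) \<and> \<alpha> (q, axis i 1) (Inr i) = 1)"

lemma axis_component: "axis i t $ j = (if j = i then t else 0)"
  by (simp add: axis_def)

lemma sum_delta_delta:
  "(\<Sum>k\<in>(UNIV::'n::finite set). \<Sum>l\<in>UNIV. if k = i then if l = i then c else 0 else 0) = (c::real)"
proof -
  have "(\<Sum>l\<in>UNIV. if k = i then if l = i then c else 0 else 0) = (if k = i then c else 0)" for k
    by (cases "k = i") simp_all
  then show ?thesis by simp
qed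

lemma normalised_at_axis_dform_Ham1:
  "normalised_at_axis i (dform (Ham1 :: 'n::finite point \<Rightarrow> real))"
  unfolding normalised_at_axis_def
proof (intro allI impI conjI)
  fix q m assume x: "(q, axis i 1) \<in> (region :: 'n point set)"
  have "Ham1_term_derivative k l (q, axis i 1) (cbasis (Inl m)) = 0" for k l
    by (auto simp: Ham1_term_derivative_def cbasis_def axis_def)
  then show "dform Ham1 (q, axis i 1) (Inl m) = 0"
    by (simp add: dform_Ham1[OF x])
  have "Ham1_term_derivative k l (q, axis i 1) (cbasis (Inr i))
      = (if k = i then if l = i then 2 else 0 else 0)" for k l
    by (auto simp: Ham1_term_derivative_def cbasis_def axis_def)
  then show "dform Ham1 (q, axis i 1) (Inr i) = 1"
    by (simp add: dform_Ham1[OF x] sum_delta_delta)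
qed

lemma normalised_at_axis_S_op:
  assumes "normalised_at_axis i \<alpha>"
  shows "normalised_at_axis i (S_op \<alpha>)"
  unfolding normalised_at_axis_def
proof (intro allI impI conjI)
  fix q m assume "(q, axis i 1) \<in> region"
  then have dq_part: "\<alpha> (q, axis i 1) (Inl k) = 0" and dp_i: "\<alpha> (q, axis i 1) (Inr i) = 1" for k
    using assms by (auto simp: normalised_at_axis_def)
  \<comment> \<open>at p = e_i all products p_k p_l with k < l vanish\<close>
  have "P0 (q, axis i 1) (Inr k) (Inr l) = 0" for k l
    by (auto simp: P0_def axis_def)
  then show "S_op \<alpha> (q, axis i 1) (Inl m) = 0"
    by (simp add: S_op_def S_at_eq bv_map_P0_Inr dq_part)
  have "P0 (q, axis i 1) (Inr k) (Inl i) * \<alpha> (q, axis i 1) (Inr k) = (if k = i then 1 else 0)" for k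
    by (simp add: P0_def axis_component dp_i)
  then show "S_op \<alpha> (q, axis i 1) (Inr i) = 1"
    by (simp add: S_op_def S_at_eq bv_map_P0_Inl dq_part)
qed

lemma normalised_at_axis_S_op_power_dform_Ham1:
  "normalised_at_axis i ((S_op ^^ k) (dform (Ham1 :: 'n::{finite,linorder} point \<Rightarrow> real)))"
  by (induction k) (simp_all add: normalised_at_axis_dform_Ham1 normalised_at_axis_S_op)

section \<open>Potentials of graded forms\<close>

lemma has_dform_on_Euler:
  fixes H :: "'n::finite point \<Rightarrow> real"
  assumes H: "has_dform_on H \<alpha> region" and hom: "\<And>j. p_homogeneous d (\<lambda>x. \<alpha> x (Inr j))"
    and x: "x \<in> region"
  shows "H x = H (fst x, 0) + 1 / real (Suc d) * (\<Sum>j\<in>UNIV. snd x $ j * \<alpha> x (Inr j))"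
proof -
  define S where "S = (\<Sum>j\<in>UNIV. snd x $ j * \<alpha> x (Inr j))"
  define G where "G t = H (fst x, t *\<^sub>R snd x) - t ^ Suc d / real (Suc d) * S" for t
  have ray_derivative: "((\<lambda>t. H (fst x, t *\<^sub>R snd x)) has_real_derivative t ^ d * S) (at t)" for t
  proof -
    let ?y = "(fst x, t *\<^sub>R snd x)"
    have "?y \<in> region" using x by (simp add: region_iff)
    then have "(H has_derivative (\<lambda>v. \<Sum>k\<in>UNIV. \<alpha> ?y k * coord v k)) (at ?y)"
      using H by (simp add: has_dform_on_def)
    moreover have "((\<lambda>t. (fst x, t *\<^sub>R snd x)) has_derivative (\<lambda>h. (0, h *\<^sub>R snd x))) (at t)"
      by (auto intro!: derivative_eq_intros)
    moreover have "(\<Sum>k\<in>UNIV. \<alpha> ?y k * coord (0, h *\<^sub>R snd x) k) = t ^ d * S * h" for h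
      using p_homogeneous_scaleR[OF hom x]
      by (simp add: sum_UNIV_sum_type coord_def S_def sum_distrib_left mult_ac)
    ultimately show ?thesis
      unfolding has_field_derivative_def using has_derivative_compose by fastforce
  qed
  have "\<forall>t. DERIV G t :> 0"
  proof
    fix t
    have "DERIV G t :> t ^ d * S - (real (Suc d) * t ^ d) / real (Suc d) * S"
      unfolding G_def by (rule derivative_eq_intros ray_derivative refl | simp)+
    then show "DERIV G t :> 0" by simp
  qed
  then have "G 1 = G 0" by (rule DERIV_isconst_all)
  then show ?thesis by (simp add: G_def S_def)
qed

lemma p_homogeneous_Ham0: "p_homogeneous (Suc 0) (Ham0 :: 'n::finite point \<Rightarrow> real)"
proof -
  have "p_homogeneous (Suc 0) (\<lambda>x::'n point. \<Sum>j\<in>UNIV. snd x $ j * (\<lambda>q. 1) (fst x))"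
    by (intro p_homogeneous_sum p_homogeneous_mult_p p_homogeneous_coeff finite)
  then show ?thesis by (rule p_homogeneous_cong) (simp add: Ham0_def)
qed

lemma p_homogeneous_Ham1: "p_homogeneous (Suc (Suc 0)) (Ham1 :: 'n::finite point \<Rightarrow> real)"
proof -
  have "p_homogeneous (Suc (Suc 0)) (\<lambda>x::'n point. (\<lambda>q. 1/2) (fst x)
      * (\<Sum>i\<in>UNIV. \<Sum>j\<in>UNIV. snd x $ i * (snd x $ j * (\<lambda>q. exp (- \<bar>q$i - q$j\<bar>)) (fst x))))"
    by (intro p_homogeneous_mult_coeff p_homogeneous_sum p_homogeneous_mult_p p_homogeneous_coeff finite)
  then show ?thesis by (rule p_homogeneous_cong) (simp add: Ham1_def mult_ac)
qed

lemma Ham0_axis: "Ham0 (q, axis i 1) = 1"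
  by (simp add: Ham0_def axis_component)

lemma Ham1_axis: "Ham1 (q, axis i 1) = 1/2"
proof -
  have "snd (q, axis i 1) $ k * snd (q, axis i 1) $ l * E (q, axis i 1) k l
      = (if k = i then if l = i then 1 else 0 else 0)" for k l
    by (simp add: axis_component)
  then show ?thesis by (simp add: Ham1_def sum_delta_delta)
qed

lemma poly_in_p_deg_Ham0:
  fixes H :: "('n::finite) point \<Rightarrow> real"
  assumes "\<forall>x\<in>region. H x = Ham0 x"
  shows "poly_in_p_deg H region (Suc 0)"
proof -
  fix i :: 'n
  obtain q where q: "(q, axis i 1) \<in> region" using ex_in_region by blast
  show ?thesis
    by (rule poly_in_p_deg_add_p_homogeneous[where g="\<lambda>q. 0", OF _ p_homogeneous_Ham0 _ q])
      (simp_all add: assms Ham0_axis)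
qed

lemma poly_in_p_deg_Ham1:
  fixes H :: "('n::finite) point \<Rightarrow> real"
  assumes "\<forall>x\<in>region. H x = Ham1 x"
  shows "poly_in_p_deg H region (Suc (Suc 0))"
proof -
  fix i :: 'n
  obtain q where q: "(q, axis i 1) \<in> region" using ex_in_region by blast
  show ?thesis
    by (rule poly_in_p_deg_add_p_homogeneous[where g="\<lambda>q. 0", OF _ p_homogeneous_Ham1 _ q])
      (simp_all add: assms Ham1_axis)
qed

lemma poly_in_p_deg_potential_S_op_power_dform_Ham1:
  fixes G :: "'n::{finite,linorder} point \<Rightarrow> real"
  assumes G: "has_dform_on G ((S_op ^^ k) (dform Ham1)) region"
  shows "poly_in_p_deg G region (Suc (Suc k))"
proof -
  fix i :: 'n
  obtain q where q: "(q, axis i 1) \<in> region" using ex_in_region by blast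
  define \<alpha> where "\<alpha> = (S_op ^^ k) (dform (Ham1 :: 'n point \<Rightarrow> real))"
  define F where "F x = (\<lambda>q. 1 / real (Suc (Suc k))) (fst x) * (\<Sum>j\<in>UNIV. snd x $ j * \<alpha> x (Inr j))"
    for x :: "'n point"
  have dp_part: "p_homogeneous (Suc k) (\<lambda>x. \<alpha> x (Inr j))" for j
    using graded_form_S_op_power_dform_Ham1[of k] unfolding \<alpha>_def graded_form_def by blast
  then have "p_homogeneous (Suc (Suc k)) F"
    unfolding F_def by (intro p_homogeneous_mult_coeff p_homogeneous_sum p_homogeneous_mult_p finite)
  moreover have "\<forall>x\<in>region. G x = G (fst x, 0) + F x"
    using has_dform_on_Euler[where \<alpha>=\<alpha>, OF _ dp_part] G by (simp add: F_def \<alpha>_def)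
  moreover have "F (q, axis i 1) = 1 / real (Suc (Suc k))"
  proof -
    have "\<alpha> (q, axis i 1) (Inr i) = 1"
      using normalised_at_axis_S_op_power_dform_Ham1[of i k] q
      unfolding \<alpha>_def normalised_at_axis_def by blast
    then have "axis i 1 $ j * \<alpha> (q, axis i 1) (Inr j) = (if j = i then 1 else 0)" for j
      by (simp add: axis_component)
    then show ?thesis by (simp add: F_def)
  qed
  ultimately show ?thesis
    using q by (intro poly_in_p_deg_add_p_homogeneous) auto
qed

theorem corollary1:
  fixes H :: "nat \<Rightarrow> ('n::{finite,linorder}) point \<Rightarrow> real"
  assumes "\<forall>x\<in>region. H 0 x = Ham0 x"
      and "\<forall>x\<in>region. H 1 x = Ham1 x"
      and "\<forall>i\<ge>1. has_dform_on (H (Suc i)) ((S_op ^^ i) (dform Ham1)) region"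
  shows "\<forall>i. poly_in_p_deg (H i) region (i + 1)"
proof
  fix i
  consider "i = 0" | "i = 1" | k where "i = Suc (Suc k)"
    by (metis One_nat_def not0_implies_Suc)
  then show "poly_in_p_deg (H i) region (i + 1)"
  proof cases
    case 1
    then show ?thesis using poly_in_p_deg_Ham0 assms(1) by simp
  next
    case 2
    then show ?thesis using poly_in_p_deg_Ham1 assms(2) by simp
  next
    case (3 k)
    then show ?thesis
      using poly_in_p_deg_potential_S_op_power_dform_Ham1[OF assms(3)[rule_format, of "Suc k"]] by simp
  qed
qed

end
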